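(* For every $n\ge 1$, the Jonquières group $\mathcal{B}_n$ is solvable of derived length $n+1$.
   Context: $\mathcal{B}_n=\{f=(f_1,\dots,f_n)\in\mathrm{Aut}(\mathbb{A}^n_{\mathbb{C}}): f_i=a_ix_i+p_i,\ a_i\in\mathbb{C}^*,\ p_i\in\mathbb{C}[x_{i+1},\dots,x_n]\}$. For a group $G$, $D^0(G)=G$, $D^{k}(G)$ is the subgroup generated by commutators of $D^{k-1}(G)$; the derived length is the least $k$ with $D^k(G)=\{1\}$. *)

theory Defs
  imports Complex_Main "HOL-Algebra.Solvable_Groups"
begin

text \<open>Polynomial functions on points x :: nat \<Rightarrow> complex that only involve the
  coordinates x j with j \<in> V (i.e. elements of \<complex>[x_j : j \<in> V], viewed as functions;
  over the infinite field \<complex> polynomials and polynomial functions correspond bijectively).\<close>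
inductive_set poly_fun :: "nat set \<Rightarrow> ((nat \<Rightarrow> complex) \<Rightarrow> complex) set"
  for V :: "nat set" where
  const: "(\<lambda>x. c) \<in> poly_fun V"
| var: "j \<in> V \<Longrightarrow> (\<lambda>x. x j) \<in> poly_fun V"
| add: "p \<in> poly_fun V \<Longrightarrow> q \<in> poly_fun V \<Longrightarrow> (\<lambda>x. p x + q x) \<in> poly_fun V"
| mult: "p \<in> poly_fun V \<Longrightarrow> q \<in> poly_fun V \<Longrightarrow> (\<lambda>x. p x * q x) \<in> poly_fun V"

text \<open>Points of \<A>^n are represented by x :: nat \<Rightarrow> complex; only the coordinates
  x 1, ..., x n matter, all other coordinates are normalised to 0.\<close>
definition jonq_id :: "nat \<Rightarrow> (nat \<Rightarrow> complex) \<Rightarrow> (nat \<Rightarrow> complex)" where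
  "jonq_id n = (\<lambda>x i. if i \<in> {1..n} then x i else 0)"

definition jonq_set :: "nat \<Rightarrow> ((nat \<Rightarrow> complex) \<Rightarrow> (nat \<Rightarrow> complex)) set" where
  "jonq_set n = {f. \<exists>a p. (\<forall>i\<in>{1..n}. a i \<noteq> (0::complex) \<and> p i \<in> poly_fun {i+1..n}) \<and>
      f = (\<lambda>x i. if i \<in> {1..n} then a i * x i + p i x else 0)}"

definition jonquieres :: "nat \<Rightarrow> ((nat \<Rightarrow> complex) \<Rightarrow> (nat \<Rightarrow> complex)) monoid" where
  "jonquieres n = \<lparr>carrier = jonq_set n, mult = (\<lambda>f g. f \<circ> g), one = jonq_id n\<rparr>"

definition derived_length :: "('a, 'b) monoid_scheme \<Rightarrow> nat" where
  "derived_length G = (LEAST k. (derived G ^^ k) (carrier G) = {\<one>\<^bsub>G\<^esub>})"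

end

theory Submission
  imports Defs
begin

text \<open>Upper bound: the diagonal coefficient of each coordinate is multiplicative, so the
  derived subgroup consists of maps with unit diagonal. On the unit-diagonal maps that fix
  x_(k+1),...,x_n, the displacement f_k(x) - x_k is additive, hence it vanishes on their
  commutators; so each further derivation frees one more coordinate and D^(n+1) is trivial.
  Lower bound: the shear x_m \<mapsto> x_m + c x_(m+1)\<cdots>x_(m+r) is both the commutator of
  the dilation x_m \<mapsto> 2 x_m with itself and the commutator of the shear with one more
  factor x_(m+r+1) with the translation of x_(m+r+1). Hence the translation x_1 \<mapsto> x_1 + 1 lies in D^n.\<close>

lemma (in group) derived_set_subset_kernel:
  assumes "Groups.comm_monoid op e" and H: "subgroup H G"
    and hom: "\<And>x y. x \<in> H \<Longrightarrow> y \<in> H \<Longrightarrow> \<phi> (x \<otimes> y) = op (\<phi> x) (\<phi> y)"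
    and one: "\<phi> \<one> = e"
  shows "derived_set G H \<subseteq> {h \<in> H. \<phi> h = e}"
proof
  interpret op: Groups.comm_monoid op e by (rule assms(1))
  interpret H: subgroup H G by (rule H)
  have inv: "op (\<phi> x) (\<phi> (inv x)) = e" if "x \<in> H" for x
    using hom[of x "inv x"] that one by simp
  fix c assume "c \<in> derived_set G H"
  then obtain x y where xy: "x \<in> H" "y \<in> H" and c: "c = x \<otimes> y \<otimes> inv x \<otimes> inv y" by blast
  have "\<phi> c = op (op (\<phi> x) (\<phi> (inv x))) (op (\<phi> y) (\<phi> (inv y)))"
    using xy by (simp add: c hom op.assoc op.left_commute)
  then have "\<phi> c = e" using inv xy by simp
  moreover have "c \<in> H" using xy by (simp add: c)
  ultimately show "c \<in> {h \<in> H. \<phi> h = e}" by blast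
qed

lemma poly_fun_cong: "p \<in> poly_fun V \<Longrightarrow> (\<And>j. j \<in> V \<Longrightarrow> x j = y j) \<Longrightarrow> p x = p y"
  by (induction p rule: poly_fun.induct) auto

lemma poly_fun_mono: "p \<in> poly_fun V \<Longrightarrow> V \<subseteq> W \<Longrightarrow> p \<in> poly_fun W"
  by (induction p rule: poly_fun.induct) (auto intro: poly_fun.intros)

lemma poly_fun_compose:
  "p \<in> poly_fun V \<Longrightarrow> (\<And>j. j \<in> V \<Longrightarrow> (\<lambda>x. g x j) \<in> poly_fun W) \<Longrightarrow> (\<lambda>x. p (g x)) \<in> poly_fun W"
  by (induction p rule: poly_fun.induct) (auto intro: poly_fun.intros)

lemma poly_fun_cmult: "p \<in> poly_fun V \<Longrightarrow> (\<lambda>x. c * p x) \<in> poly_fun V"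
  by (rule poly_fun.mult[OF poly_fun.const])

lemma poly_fun_neg_divide: "p \<in> poly_fun V \<Longrightarrow> (\<lambda>x. - p x / c) \<in> poly_fun V"
  using poly_fun_cmult[of p V "-1/c"] by simp

lemma poly_fun_prod: "finite S \<Longrightarrow> S \<subseteq> V \<Longrightarrow> (\<lambda>x. \<Prod>l\<in>S. x l) \<in> poly_fun V"
  by (induction S rule: finite_induct) (auto intro: poly_fun.intros)

lemma jonq_set_iff:
  "f \<in> jonq_set n \<longleftrightarrow> (\<forall>x i. i \<notin> {1..n} \<longrightarrow> f x i = 0) \<and>
     (\<forall>i\<in>{1..n}. \<exists>a p. a \<noteq> 0 \<and> p \<in> poly_fun {i+1..n} \<and> (\<forall>x. f x i = a * x i + p x))"
  (is "_ \<longleftrightarrow> ?outside \<and> ?coords")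
proof
  assume "f \<in> jonq_set n"
  then show "?outside \<and> ?coords" unfolding jonq_set_def by fastforce
next
  assume *: "?outside \<and> ?coords"
  then obtain a p where ap: "\<And>i. i \<in> {1..n} \<Longrightarrow>
      a i \<noteq> 0 \<and> p i \<in> poly_fun {i+1..n} \<and> (\<forall>x. f x i = a i * x i + p i x)"
    by metis
  have "f = (\<lambda>x i. if i \<in> {1..n} then a i * x i + p i x else 0)"
    using ap * by (auto simp: fun_eq_iff)
  then show "f \<in> jonq_set n" unfolding jonq_set_def using ap by blast
qed

lemma jonq_set_outside: "f \<in> jonq_set n \<Longrightarrow> i \<notin> {1..n} \<Longrightarrow> f x i = 0"
  by (simp add: jonq_set_iff)

definition jonq_coeff :: "((nat \<Rightarrow> complex) \<Rightarrow> (nat \<Rightarrow> complex)) \<Rightarrow> nat \<Rightarrow> complex" where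
  "jonq_coeff f i = f (\<lambda>j. if j = i then 1 else 0) i - f (\<lambda>j. 0) i"

lemma jonq_coeff_eqI:
  assumes "p \<in> poly_fun {i+1..n}" and "\<And>x. f x i = a * x i + p x"
  shows "jonq_coeff f i = a"
proof -
  have "p (\<lambda>j. if j = i then 1 else 0) = p (\<lambda>j. 0)" by (rule poly_fun_cong[OF assms(1)]) auto
  then show ?thesis by (simp add: jonq_coeff_def assms(2))
qed

lemma jonq_coord:
  assumes "f \<in> jonq_set n" and "i \<in> {1..n}"
  shows "jonq_coeff f i \<noteq> 0" and "\<exists>p\<in>poly_fun {i+1..n}. \<forall>x. f x i = jonq_coeff f i * x i + p x"
proof -
  obtain a p where ap: "a \<noteq> 0" "p \<in> poly_fun {i+1..n}" "\<forall>x. f x i = a * x i + p x"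
    using assms unfolding jonq_set_iff by blast
  moreover have "jonq_coeff f i = a" using ap by (intro jonq_coeff_eqI) auto
  ultimately show "jonq_coeff f i \<noteq> 0" "\<exists>p\<in>poly_fun {i+1..n}. \<forall>x. f x i = jonq_coeff f i * x i + p x"
    by auto
qed

lemma jonq_coord_poly_fun:
  assumes "f \<in> jonq_set n" and "i \<in> {1..n}"
  shows "(\<lambda>x. f x i) \<in> poly_fun {i..n}"
proof -
  obtain p where "p \<in> poly_fun {i+1..n}" "\<forall>x. f x i = jonq_coeff f i * x i + p x"
    using jonq_coord(2)[OF assms] by blast
  moreover from this(1) have "(\<lambda>x. jonq_coeff f i * x i + p x) \<in> poly_fun {i..n}"
    using assms(2) by (intro poly_fun.add poly_fun_cmult poly_fun.var) (auto elim: poly_fun_mono)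
  ultimately show ?thesis by simp
qed

lemma jonq_comp_coord:
  assumes f: "f \<in> jonq_set n" and g: "g \<in> jonq_set n" and i: "i \<in> {1..n}"
  shows "\<exists>r\<in>poly_fun {i+1..n}. \<forall>x. (f \<circ> g) x i = jonq_coeff f i * jonq_coeff g i * x i + r x"
proof -
  obtain p where p: "p \<in> poly_fun {i+1..n}" "\<forall>x. f x i = jonq_coeff f i * x i + p x"
    using jonq_coord(2)[OF f i] by blast
  obtain q where q: "q \<in> poly_fun {i+1..n}" "\<forall>x. g x i = jonq_coeff g i * x i + q x"
    using jonq_coord(2)[OF g i] by blast
  have "(\<lambda>x. p (g x)) \<in> poly_fun {i+1..n}"
  proof (rule poly_fun_compose[OF p(1)])
    fix j assume "j \<in> {i+1..n}"
    then show "(\<lambda>x. g x j) \<in> poly_fun {i+1..n}"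
      using jonq_coord_poly_fun[OF g, of j] i by (auto elim: poly_fun_mono)
  qed
  then have "(\<lambda>x. jonq_coeff f i * q x + p (g x)) \<in> poly_fun {i+1..n}"
    using q(1) by (intro poly_fun.add poly_fun_cmult)
  moreover have "(f \<circ> g) x i = jonq_coeff f i * jonq_coeff g i * x i + (jonq_coeff f i * q x + p (g x))" for x
    using p q by (simp add: algebra_simps)
  ultimately show ?thesis by (intro bexI[of _ "\<lambda>x. jonq_coeff f i * q x + p (g x)"]) auto
qed

lemma jonq_comp_closed:
  assumes "f \<in> jonq_set n" and "g \<in> jonq_set n"
  shows "f \<circ> g \<in> jonq_set n"
  unfolding jonq_set_iff[of "f \<circ> g"]
proof (intro conjI ballI allI impI)
  show "(f \<circ> g) x i = 0" if "i \<notin> {1..n}" for x i using assms(1) that by (simp add: jonq_set_outside)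
  fix i assume i: "i \<in> {1..n}"
  obtain r where "r \<in> poly_fun {i+1..n}" "\<forall>x. (f \<circ> g) x i = jonq_coeff f i * jonq_coeff g i * x i + r x"
    using jonq_comp_coord[OF assms i] by blast
  moreover have "jonq_coeff f i * jonq_coeff g i \<noteq> 0"
    using jonq_coord(1)[OF assms(1) i] jonq_coord(1)[OF assms(2) i] by simp
  ultimately show "\<exists>a p. a \<noteq> 0 \<and> p \<in> poly_fun {i+1..n} \<and> (\<forall>x. (f \<circ> g) x i = a * x i + p x)"
    by blast
qed

lemma jonq_coeff_comp:
  "f \<in> jonq_set n \<Longrightarrow> g \<in> jonq_set n \<Longrightarrow> i \<in> {1..n} \<Longrightarrow>
    jonq_coeff (f \<circ> g) i = jonq_coeff f i * jonq_coeff g i"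
  using jonq_comp_coord jonq_coeff_eqI by metis

lemma jonq_id_in_jonq_set: "jonq_id n \<in> jonq_set n"
  unfolding jonq_set_iff
  by (auto simp: jonq_id_def intro!: exI[of _ 1] exI[of _ "\<lambda>x. 0"] poly_fun.const)

lemma jonq_comp_id:
  assumes f: "f \<in> jonq_set n"
  shows "f \<circ> jonq_id n = f"
proof (intro ext)
  fix x i
  show "(f \<circ> jonq_id n) x i = f x i"
  proof (cases "i \<in> {1..n}")
    case True
    show ?thesis
      by (simp, rule poly_fun_cong[OF jonq_coord_poly_fun[OF f True]]) (use True in \<open>auto simp: jonq_id_def\<close>)
  qed (use f in \<open>auto simp: jonq_set_outside\<close>)
qed

lemma jonq_id_comp: "f \<in> jonq_set n \<Longrightarrow> jonq_id n \<circ> f = f"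
  by (auto simp: fun_eq_iff jonq_id_def jonq_set_outside)

lemma jonquieres_carrier [simp]: "carrier (jonquieres n) = jonq_set n"
  and jonquieres_mult [simp]: "f \<otimes>\<^bsub>jonquieres n\<^esub> g = f \<circ> g"
  and jonquieres_one [simp]: "\<one>\<^bsub>jonquieres n\<^esub> = jonq_id n"
  by (simp_all add: jonquieres_def)

lemma monoid_jonquieres: "monoid (jonquieres n)"
  by unfold_locales (auto simp: jonq_comp_closed jonq_id_in_jonq_set jonq_comp_id jonq_id_comp o_assoc)

definition jonq_elem :: "nat \<Rightarrow> nat \<Rightarrow> complex \<Rightarrow> ((nat \<Rightarrow> complex) \<Rightarrow> complex) \<Rightarrow>
    (nat \<Rightarrow> complex) \<Rightarrow> (nat \<Rightarrow> complex)" where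
  "jonq_elem n k a p = (\<lambda>x i. if i \<in> {1..n} then if i = k then a * x i + p x else x i else 0)"

lemma jonq_elem_in_jonq_set:
  assumes "a \<noteq> 0" and "p \<in> poly_fun {k+1..n}"
  shows "jonq_elem n k a p \<in> jonq_set n"
  unfolding jonq_set_iff
proof (intro conjI ballI allI impI)
  fix i assume "i \<in> {1..n}"
  show "\<exists>b q. b \<noteq> 0 \<and> q \<in> poly_fun {i+1..n} \<and> (\<forall>x. jonq_elem n k a p x i = b * x i + q x)"
  proof (cases "i = k")
    case True
    then show ?thesis using \<open>i \<in> {1..n}\<close> assms by (auto simp: jonq_elem_def)
  next
    case False
    then show ?thesis using \<open>i \<in> {1..n}\<close>
      by (auto simp: jonq_elem_def intro!: exI[of _ 1] exI[of _ "\<lambda>x. 0"] poly_fun.const)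
  qed
qed (auto simp: jonq_elem_def)

lemma jonq_elem_one: "jonq_elem n k 1 (\<lambda>x. 0) = jonq_id n"
  by (simp add: fun_eq_iff jonq_elem_def jonq_id_def)

lemma jonq_elem_comp:
  assumes "p \<in> poly_fun {k+1..n}"
  shows "jonq_elem n k a p \<circ> jonq_elem n k b q = jonq_elem n k (a * b) (\<lambda>x. a * q x + p x)"
proof (intro ext)
  fix x i
  have "p (jonq_elem n k b q x) = p x" by (rule poly_fun_cong[OF assms]) (auto simp: jonq_elem_def)
  then show "(jonq_elem n k a p \<circ> jonq_elem n k b q) x i = jonq_elem n k (a * b) (\<lambda>x. a * q x + p x) x i"
    by (simp add: jonq_elem_def algebra_simps)
qed

lemma jonq_elem_inverse:
  assumes "a \<noteq> 0" and p: "p \<in> poly_fun {k+1..n}"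
  shows "jonq_elem n k (1/a) (\<lambda>x. - p x / a) \<circ> jonq_elem n k a p = jonq_id n"
    and "jonq_elem n k a p \<circ> jonq_elem n k (1/a) (\<lambda>x. - p x / a) = jonq_id n"
proof -
  have "jonq_elem n k (1/a) (\<lambda>x. - p x / a) \<circ> jonq_elem n k a p
      = jonq_elem n k (1/a * a) (\<lambda>x. 1/a * p x + - p x / a)"
    using p by (intro jonq_elem_comp poly_fun_neg_divide)
  also have "\<dots> = jonq_id n" using assms(1) by (simp add: jonq_elem_one)
  finally show "jonq_elem n k (1/a) (\<lambda>x. - p x / a) \<circ> jonq_elem n k a p = jonq_id n" .
  have "jonq_elem n k a p \<circ> jonq_elem n k (1/a) (\<lambda>x. - p x / a)
      = jonq_elem n k (a * (1/a)) (\<lambda>x. a * (- p x / a) + p x)"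
    using p by (rule jonq_elem_comp)
  also have "\<dots> = jonq_id n" using assms(1) by (simp add: jonq_elem_one)
  finally show "jonq_elem n k a p \<circ> jonq_elem n k (1/a) (\<lambda>x. - p x / a) = jonq_id n" .
qed

lemma jonq_elem_Units:
  assumes "a \<noteq> 0" and "p \<in> poly_fun {k+1..n}"
  shows "jonq_elem n k a p \<in> Units (jonquieres n)"
proof -
  have "jonq_elem n k (1/a) (\<lambda>x. - p x / a) \<in> jonq_set n"
    using assms by (intro jonq_elem_in_jonq_set poly_fun_neg_divide) auto
  then show ?thesis
    using jonq_elem_inverse[OF assms] jonq_elem_in_jonq_set[OF assms] by (auto simp: Units_def)
qed

text \<open>Every f \<in> B_n factors as e_n \<circ> \<dots> \<circ> e_1, where e_k performs the k-th coordinate of f.\<close>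
lemma jonq_set_Units:
  assumes f: "f \<in> jonq_set n"
  shows "f \<in> Units (jonquieres n)"
proof -
  interpret monoid "jonquieres n" by (rule monoid_jonquieres)
  obtain a p where ap: "\<forall>i\<in>{1..n}. a i \<noteq> 0 \<and> p i \<in> poly_fun {i+1..n}"
    and f_eq: "f = (\<lambda>x i. if i \<in> {1..n} then a i * x i + p i x else 0)"
    using f unfolding jonq_set_def by blast
  define g where "g k = (\<lambda>x i. if i \<in> {1..n} then if i \<le> k then a i * x i + p i x else x i else 0)" for k
  have g_Suc: "g (Suc k) = jonq_elem n (Suc k) (a (Suc k)) (p (Suc k)) \<circ> g k" if "Suc k \<le> n" for k
  proof (intro ext)
    fix x i
    have "p (Suc k) (g k x) = p (Suc k) x"
      using ap that by (intro poly_fun_cong[of "p (Suc k)" "{Suc k + 1..n}"]) (auto simp: g_def)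
    then show "g (Suc k) x i = (jonq_elem n (Suc k) (a (Suc k)) (p (Suc k)) \<circ> g k) x i"
      using that by (cases "i = Suc k") (simp_all add: g_def jonq_elem_def)
  qed
  have "g k \<in> Units (jonquieres n)" if "k \<le> n" for k
    using that
  proof (induction k)
    case 0
    have "g 0 = jonq_id n" by (simp add: fun_eq_iff g_def jonq_id_def)
    then show ?case using Units_one_closed by simp
  next
    case (Suc k)
    then have "jonq_elem n (Suc k) (a (Suc k)) (p (Suc k)) \<in> Units (jonquieres n)"
      using ap by (intro jonq_elem_Units) auto
    then show ?case using Units_m_closed[of _ "g k"] Suc g_Suc by (simp del: comp_apply)
  qed
  moreover have "g n = f" by (simp add: fun_eq_iff g_def f_eq)
  ultimately show ?thesis by auto
qed

lemma group_jonquieres: "group (jonquieres n)"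
  by (rule group.intro[OF monoid_jonquieres]) (auto simp: group_axioms_def jonq_set_Units)

lemma inv_jonq_elem:
  assumes "a \<noteq> 0" and "p \<in> poly_fun {k+1..n}"
  shows "inv\<^bsub>jonquieres n\<^esub> (jonq_elem n k a p) = jonq_elem n k (1/a) (\<lambda>x. - p x / a)"
proof -
  interpret group "jonquieres n" by (rule group_jonquieres)
  have "jonq_elem n k (1/a) (\<lambda>x. - p x / a) \<in> jonq_set n"
    using assms by (intro jonq_elem_in_jonq_set poly_fun_neg_divide) auto
  then show ?thesis
    using jonq_elem_inverse(1)[OF assms] jonq_elem_in_jonq_set[OF assms] by (intro inv_equality) auto
qed

lemma jonq_id_apply: "i \<in> {1..n} \<Longrightarrow> jonq_id n x i = x i"
  by (simp add: jonq_id_def)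

lemma jonq_coeff_id: "i \<in> {1..n} \<Longrightarrow> jonq_coeff (jonq_id n) i = 1"
  by (simp add: jonq_coeff_def jonq_id_def)

definition unitriangular :: "nat \<Rightarrow> nat \<Rightarrow> ((nat \<Rightarrow> complex) \<Rightarrow> (nat \<Rightarrow> complex)) set" where
  "unitriangular n k = {f \<in> jonq_set n. \<forall>i\<in>{1..n}. jonq_coeff f i = 1 \<and> (k < i \<longrightarrow> (\<forall>x. f x i = x i))}"

lemma unitriangular_subgroup: "subgroup (unitriangular n k) (jonquieres n)"
proof -
  interpret group "jonquieres n" by (rule group_jonquieres)
  show ?thesis
  proof (rule subgroupI)
    show "unitriangular n k \<subseteq> carrier (jonquieres n)" by (auto simp: unitriangular_def)
    have "jonq_id n \<in> unitriangular n k"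
      using jonq_id_in_jonq_set by (simp add: unitriangular_def jonq_coeff_id jonq_id_apply)
    then show "unitriangular n k \<noteq> {}" by blast
  next
    fix f g assume "f \<in> unitriangular n k" "g \<in> unitriangular n k"
    then show "f \<otimes>\<^bsub>jonquieres n\<^esub> g \<in> unitriangular n k"
      by (auto simp: unitriangular_def jonq_comp_closed jonq_coeff_comp)
  next
    fix f assume f: "f \<in> unitriangular n k"
    then have f_in: "f \<in> jonq_set n" by (simp add: unitriangular_def)
    let ?g = "inv\<^bsub>jonquieres n\<^esub> f"
    have g_in: "?g \<in> jonq_set n" and fg: "f \<circ> ?g = jonq_id n"
      using f_in inv_closed r_inv by auto
    have "jonq_coeff ?g i = 1" if "i \<in> {1..n}" for i
      using jonq_coeff_comp[OF f_in g_in that] f that by (simp add: fg jonq_coeff_id unitriangular_def)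
    moreover have "?g x i = x i" if "i \<in> {1..n}" "k < i" for x i
    proof -
      have "?g x i = f (?g x) i" using f that by (simp add: unitriangular_def)
      also have "\<dots> = x i" using fg that by (metis comp_apply jonq_id_apply)
      finally show ?thesis .
    qed
    ultimately show "?g \<in> unitriangular n k" using g_in by (simp add: unitriangular_def)
  qed
qed

lemma unitriangular_zero: "unitriangular n 0 = {jonq_id n}"
proof
  show "{jonq_id n} \<subseteq> unitriangular n 0"
    using subgroup.one_closed[OF unitriangular_subgroup] by simp
  show "unitriangular n 0 \<subseteq> {jonq_id n}"
    by (auto simp: unitriangular_def fun_eq_iff jonq_id_def jonq_set_outside)
qed

lemma derived_jonquieres_subset: "derived (jonquieres n) (carrier (jonquieres n)) \<subseteq> unitriangular n n"
proof -
  interpret group "jonquieres n" by (rule group_jonquieres)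
  have kernel: "derived_set (jonquieres n) (carrier (jonquieres n)) \<subseteq> {h \<in> jonq_set n. jonq_coeff h i = 1}"
    if "i \<in> {1..n}" for i
    using derived_set_subset_kernel[OF mult.comm_monoid_axioms subgroup_self, where \<phi> = "\<lambda>f. jonq_coeff f i"]
      that jonq_coeff_comp jonq_coeff_id by simp
  have "derived_set (jonquieres n) (carrier (jonquieres n)) \<subseteq> unitriangular n n"
  proof
    fix c assume c: "c \<in> derived_set (jonquieres n) (carrier (jonquieres n))"
    have "c \<in> jonq_set n" using subsetD[OF derived_set_in_carrier[OF subset_refl] c] by simp
    moreover have "jonq_coeff c i = 1" if "i \<in> {1..n}" for i using subsetD[OF kernel[OF that] c] by simp
    ultimately show "c \<in> unitriangular n n" by (simp add: unitriangular_def)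
  qed
  then show ?thesis
    unfolding derived_def by (rule generate_subgroup_incl[OF _ unitriangular_subgroup])
qed

lemma derived_unitriangular_subset:
  assumes "Suc k \<le> n"
  shows "derived (jonquieres n) (unitriangular n (Suc k)) \<subseteq> unitriangular n k"
proof -
  interpret group "jonquieres n" by (rule group_jonquieres)
  let ?U = "unitriangular n (Suc k)"
  have k: "Suc k \<in> {1..n}" using assms by simp
  define displacement where "displacement x f = f x (Suc k) - x (Suc k)"
    for x and f :: "(nat \<Rightarrow> complex) \<Rightarrow> (nat \<Rightarrow> complex)"
  have displacement_comp: "displacement x (f \<circ> g) = displacement x f + displacement x g" if f: "f \<in> ?U" and g: "g \<in> ?U" for x f g
  proof -
    obtain p where p: "p \<in> poly_fun {Suc k + 1..n}" "\<forall>x. f x (Suc k) = x (Suc k) + p x"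
      using jonq_coord(2)[OF _ k, of f] f k by (auto simp: unitriangular_def)
    have "p (g x) = p x" using g by (intro poly_fun_cong[OF p(1)]) (auto simp: unitriangular_def)
    then show ?thesis by (simp add: displacement_def p(2))
  qed
  have "displacement x (jonq_id n) = 0" for x using k by (simp add: displacement_def jonq_id_def)
  then have "derived_set (jonquieres n) ?U \<subseteq> {h \<in> ?U. displacement x h = 0}" for x
    using derived_set_subset_kernel[OF add.comm_monoid_axioms unitriangular_subgroup, where \<phi> = "displacement x"]
      displacement_comp by simp
  then have "derived_set (jonquieres n) ?U \<subseteq> {h \<in> ?U. \<forall>x. displacement x h = 0}" by blast
  also have "\<dots> \<subseteq> unitriangular n k"
  proof
    fix h assume "h \<in> {h \<in> ?U. \<forall>x. displacement x h = 0}"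
    then have "h \<in> ?U" and "h x (Suc k) = x (Suc k)" for x by (auto simp: displacement_def)
    moreover have "k < i \<longleftrightarrow> i = Suc k \<or> Suc k < i" for i by auto
    ultimately show "h \<in> unitriangular n k" by (auto simp: unitriangular_def)
  qed
  finally show ?thesis
    unfolding derived_def by (rule generate_subgroup_incl[OF _ unitriangular_subgroup])
qed

lemma derived_power_jonquieres_subset:
  "j \<le> n \<Longrightarrow> (derived (jonquieres n) ^^ Suc j) (carrier (jonquieres n)) \<subseteq> unitriangular n (n - j)"
proof (induction j)
  case 0
  then show ?case using derived_jonquieres_subset by simp
next
  case (Suc j)
  interpret group "jonquieres n" by (rule group_jonquieres)
  have "(derived (jonquieres n) ^^ Suc (Suc j)) (carrier (jonquieres n))
      = derived (jonquieres n) ((derived (jonquieres n) ^^ Suc j) (carrier (jonquieres n)))"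
    by simp
  also have "\<dots> \<subseteq> derived (jonquieres n) (unitriangular n (Suc (n - Suc j)))"
    using Suc by (simp add: Suc_diff_Suc mono_derived)
  also have "\<dots> \<subseteq> unitriangular n (n - Suc j)"
    using Suc.prems by (intro derived_unitriangular_subset) simp
  finally show ?case .
qed

lemma jonq_elem_scaling_commutator:
  assumes "a \<noteq> 0" and q: "q \<in> poly_fun {m+1..n}"
  shows "jonq_elem n m a (\<lambda>x. 0) \<circ> jonq_elem n m 1 q \<circ> jonq_elem n m (1/a) (\<lambda>x. 0) \<circ> jonq_elem n m 1 (\<lambda>x. - q x)
    = jonq_elem n m 1 (\<lambda>x. (a - 1) * q x)"
proof -
  have aq: "(\<lambda>x. a * q x) \<in> poly_fun {m+1..n}" using q by (rule poly_fun_cmult)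
  have "jonq_elem n m a (\<lambda>x. 0) \<circ> jonq_elem n m 1 q = jonq_elem n m a (\<lambda>x. a * q x)"
    using jonq_elem_comp[OF poly_fun.const] by simp
  moreover have "jonq_elem n m a (\<lambda>x. a * q x) \<circ> jonq_elem n m (1/a) (\<lambda>x. 0) = jonq_elem n m 1 (\<lambda>x. a * q x)"
    using jonq_elem_comp[OF aq] assms(1) by simp
  moreover have "jonq_elem n m 1 (\<lambda>x. a * q x) \<circ> jonq_elem n m 1 (\<lambda>x. - q x) = jonq_elem n m 1 (\<lambda>x. (a - 1) * q x)"
    using jonq_elem_comp[OF aq] by (simp add: algebra_simps)
  ultimately show ?thesis by simp
qed

lemma jonq_elem_translation_commutator:
  assumes q: "q \<in> poly_fun {m+1..n}" and k: "k \<in> {m+1..n}"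
  shows "jonq_elem n m 1 q \<circ> jonq_elem n k 1 (\<lambda>x. b) \<circ> jonq_elem n m 1 (\<lambda>x. - q x) \<circ> jonq_elem n k 1 (\<lambda>x. - b)
    = jonq_elem n m 1 (\<lambda>x. q x - q (jonq_elem n k 1 (\<lambda>x. - b) x))"
proof (intro ext)
  fix x i
  let ?y = "jonq_elem n k 1 (\<lambda>x. b) (jonq_elem n m 1 (\<lambda>x. - q x) (jonq_elem n k 1 (\<lambda>x. - b) x))"
  have "q ?y = q x" by (rule poly_fun_cong[OF q]) (use k in \<open>auto simp: jonq_elem_def\<close>)
  then show "(jonq_elem n m 1 q \<circ> jonq_elem n k 1 (\<lambda>x. b) \<circ> jonq_elem n m 1 (\<lambda>x. - q x) \<circ> jonq_elem n k 1 (\<lambda>x. - b)) x i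
      = jonq_elem n m 1 (\<lambda>x. q x - q (jonq_elem n k 1 (\<lambda>x. - b) x)) x i"
    using k by (auto simp: jonq_elem_def)
qed

definition shear :: "nat \<Rightarrow> nat \<Rightarrow> nat \<Rightarrow> complex \<Rightarrow> (nat \<Rightarrow> complex) \<Rightarrow> (nat \<Rightarrow> complex)" where
  "shear n m r c = jonq_elem n m 1 (\<lambda>x. c * (\<Prod>l\<in>{m+1..m+r}. x l))"

lemma shear_poly_fun:
  assumes "m + r \<le> n"
  shows "(\<lambda>x. c * (\<Prod>l\<in>{m+1..m+r}. x l)) \<in> poly_fun {m+1..n}"
proof -
  have "(\<lambda>x. \<Prod>l\<in>{m+1..m+r}. x l) \<in> poly_fun {m+1..n}" using assms by (intro poly_fun_prod) auto
  then show ?thesis by (rule poly_fun_cmult)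
qed

lemma shear_in_jonq_set: "m + r \<le> n \<Longrightarrow> shear n m r c \<in> jonq_set n"
  unfolding shear_def using one_neq_zero shear_poly_fun by (rule jonq_elem_in_jonq_set)

lemma inv_shear:
  assumes "m + r \<le> n"
  shows "inv\<^bsub>jonquieres n\<^esub> (shear n m r c) = shear n m r (- c)"
  unfolding shear_def inv_jonq_elem[OF one_neq_zero shear_poly_fun[OF assms]] by simp

lemma shear_scaling_commutator:
  assumes "m + r \<le> n"
  shows "jonq_elem n m 2 (\<lambda>x. 0) \<circ> shear n m r c \<circ> inv\<^bsub>jonquieres n\<^esub> (jonq_elem n m 2 (\<lambda>x. 0))
    \<circ> inv\<^bsub>jonquieres n\<^esub> (shear n m r c) = shear n m r c"
  using jonq_elem_scaling_commutator[OF _ shear_poly_fun[OF assms], of 2 c]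
  by (simp add: inv_shear[OF assms] inv_jonq_elem poly_fun.const) (simp add: shear_def)

lemma shear_translation_commutator:
  assumes "1 \<le> m" and "m + Suc r \<le> n"
  shows "shear n m (Suc r) c \<circ> shear n (m + Suc r) 0 1 \<circ> inv\<^bsub>jonquieres n\<^esub> (shear n m (Suc r) c)
    \<circ> inv\<^bsub>jonquieres n\<^esub> (shear n (m + Suc r) 0 1) = shear n m r c"
proof -
  let ?k = "m + Suc r" and ?q = "\<lambda>x. c * (\<Prod>l\<in>{m+1..m+Suc r}. x l)"
  have translation: "shear n ?k 0 b = jonq_elem n ?k 1 (\<lambda>x. b)" for b by (simp add: shear_def)
  have "?q x - ?q (jonq_elem n ?k 1 (\<lambda>x. - 1) x) = c * (\<Prod>l\<in>{m+1..m+r}. x l)" for x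
  proof -
    have "(\<Prod>l\<in>{m+1..m+r}. jonq_elem n ?k 1 (\<lambda>x. - 1) x l) = (\<Prod>l\<in>{m+1..m+r}. x l)"
      using assms by (intro prod.cong) (auto simp: jonq_elem_def)
    moreover have "jonq_elem n ?k 1 (\<lambda>x. - 1) x ?k = x ?k - 1" using assms by (simp add: jonq_elem_def)
    ultimately have "(\<Prod>l\<in>{m+1..m+Suc r}. jonq_elem n ?k 1 (\<lambda>x. - 1) x l) = (\<Prod>l\<in>{m+1..m+r}. x l) * (x ?k - 1)"
      by simp
    moreover have "(\<Prod>l\<in>{m+1..m+Suc r}. x l) = (\<Prod>l\<in>{m+1..m+r}. x l) * x ?k"
      by simp
    ultimately show ?thesis by (simp only:) (simp add: algebra_simps)
  qed
  then have "shear n m r c = jonq_elem n m 1 (\<lambda>x. ?q x - ?q (jonq_elem n ?k 1 (\<lambda>x. - 1) x))"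
    by (simp add: shear_def)
  also have "\<dots> = shear n m (Suc r) c \<circ> shear n ?k 0 1 \<circ> shear n m (Suc r) (- c) \<circ> shear n ?k 0 (- 1)"
    using jonq_elem_translation_commutator[OF shear_poly_fun[OF assms(2), of c], where k = ?k and b = 1] assms
    by (simp add: translation) (simp add: shear_def)
  finally show ?thesis using assms by (simp add: inv_shear del: add_Suc_right)
qed

lemma shear_in_derived_power:
  assumes "1 \<le> m" and "m + r \<le> n" and "m + r + j \<le> n + 1"
  shows "shear n m r c \<in> (derived (jonquieres n) ^^ j) (carrier (jonquieres n))"
  using assms
proof (induction j arbitrary: m r c)
  case 0
  then show ?case by (simp add: shear_in_jonq_set)
next
  case (Suc j)
  interpret group "jonquieres n" by (rule group_jonquieres)
  let ?D = "(derived (jonquieres n) ^^ j) (carrier (jonquieres n))"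
  have "shear n m r c \<in> derived_set (jonquieres n) ?D"
  proof (cases j)
    case 0
    have "jonq_elem n m 2 (\<lambda>x. 0) \<in> ?D" and "shear n m r c \<in> ?D"
      using 0 Suc.prems by (auto intro: jonq_elem_in_jonq_set poly_fun.const shear_in_jonq_set)
    then have "jonq_elem n m 2 (\<lambda>x. 0) \<otimes>\<^bsub>jonquieres n\<^esub> shear n m r c
        \<otimes>\<^bsub>jonquieres n\<^esub> inv\<^bsub>jonquieres n\<^esub> (jonq_elem n m 2 (\<lambda>x. 0))
        \<otimes>\<^bsub>jonquieres n\<^esub> inv\<^bsub>jonquieres n\<^esub> (shear n m r c) \<in> derived_set (jonquieres n) ?D"
      by blast
    then show ?thesis by (simp only: jonquieres_mult shear_scaling_commutator[OF Suc.prems(2)])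
  next
    case (Suc j')
    have "shear n m (Suc r) c \<in> ?D" and "shear n (m + Suc r) 0 1 \<in> ?D"
      using Suc.IH Suc.prems Suc by auto
    then have "shear n m (Suc r) c \<otimes>\<^bsub>jonquieres n\<^esub> shear n (m + Suc r) 0 1
        \<otimes>\<^bsub>jonquieres n\<^esub> inv\<^bsub>jonquieres n\<^esub> (shear n m (Suc r) c)
        \<otimes>\<^bsub>jonquieres n\<^esub> inv\<^bsub>jonquieres n\<^esub> (shear n (m + Suc r) 0 1) \<in> derived_set (jonquieres n) ?D"
      by blast
    moreover have "m + Suc r \<le> n" using Suc.prems Suc by simp
    ultimately show ?thesis
      by (simp only: jonquieres_mult shear_translation_commutator[OF Suc.prems(1)])
  qed
  then have "shear n m r c \<in> derived (jonquieres n) ?D" unfolding derived_def by (rule generate.incl)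
  then show ?case by simp
qed

theorem lemma3p2:
  fixes n :: nat
  assumes "n \<ge> 1"
  shows "group (jonquieres n) \<and> solvable (jonquieres n) \<and> derived_length (jonquieres n) = n + 1"
proof -
  interpret group "jonquieres n" by (rule group_jonquieres)
  let ?D = "\<lambda>k. (derived (jonquieres n) ^^ k) (carrier (jonquieres n))"
  have trivial: "?D (n + 1) = {\<one>\<^bsub>jonquieres n\<^esub>}"
    using derived_power_jonquieres_subset[of n n] unitriangular_zero[of n]
      subgroup.one_closed[OF exp_of_derived_is_subgroup[OF subgroup_self, of "n + 1"]] by auto
  have nontrivial: "?D k \<noteq> {\<one>\<^bsub>jonquieres n\<^esub>}" if "k \<le> n" for k
  proof
    assume "?D k = {\<one>\<^bsub>jonquieres n\<^esub>}"
    then have "shear n 1 0 1 = jonq_id n" using shear_in_derived_power[of 1 0 n k 1] that assms by auto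
    then have "shear n 1 0 1 (\<lambda>i. 0) 1 = jonq_id n (\<lambda>i. 0) 1" by simp
    then show False using assms by (simp add: shear_def jonq_elem_def jonq_id_def)
  qed
  have "derived_length (jonquieres n) = n + 1"
    unfolding derived_length_def
  proof (rule Least_equality)
    show "?D (n + 1) = {\<one>\<^bsub>jonquieres n\<^esub>}" by (rule trivial)
  qed (metis nontrivial not_less_eq_eq Suc_eq_plus1)
  moreover have "solvable (jonquieres n)" using solvable_iff_trivial_derived_seq trivial by blast
  ultimately show ?thesis using group_jonquieres by blast
qed

end
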